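(* Let $\Gamma$ be a finitely generated discrete group with finite symmetric generating set $Q$ and let $Z\subseteq\mathrm{Sub}(\Gamma)$ be a uniformly recurrent subgroup. The map $q:Z\rtimes\Gamma\to\mathcal{G}$, $q(L,\gamma)=(L,\gamma L)$ for $L\in Z$, $\gamma\in\Gamma$, is a continuous, open and surjective groupoid homomorphism. In particular, $\mathcal{G}$ is a quotient of the transformation groupoid $Z\rtimes\Gamma$.
   Context: Word length $l(\gamma)$ is taken with respect to $Q$. $\mathrm{Sub}(\Gamma)$ is the space of subgroups of $\Gamma$ with the topology of pointwise convergence of indicator functions, with $\Gamma$ acting by conjugation $\gamma.L=\gamma L\gamma^{-1}$. A uniformly recurrent subgroup (URS) is a nonempty closed $\Gamma$-invariant subset $Z\subseteq\mathrm{Sub}(\Gamma)$ on which every $\Gamma$-orbit is dense. For $L\le\Gamma$, the Schreier graph $S(L)$ is the rooted labeled graph with vertex set $\Gamma/L$, root $L$, and for each $\gamma L$ and $q\in Q$ an edge from $\gamma L$ to $q\gamma L$ labeled $q$; $B_N(S(L),L)$ is the ball of radius $N$ (path metric) around the root. Root-label isomorphism means graph isomorphism preserving roots and labels. Transformation groupoid $Z\rtimes\Gamma$: the space $Z\times\Gamma$ with product topology ($\Gamma$ discrete), $r(L,\gamma)=L$, $s(L,\gamma)=\gamma L\gamma^{-1}$, product $(L,\gamma)(\gamma L\gamma^{-1},\eta)=(L,\eta\gamma)$. The groupoid $\mathcal{G}$: as a set, $\mathcal{G}=\{(L,c): L\in Z,\ c\in\Gamma/L\}$, with $r(L,\gamma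 L)=L$, $s(L,\gamma L)=\gamma L\gamma^{-1}$, product $(L,\gamma L)(\gamma L\gamma^{-1},\eta\gamma L\gamma^{-1})=(L,\eta\gamma L)$, inverse $(L,\gamma L)^{-1}=(\gamma L\gamma^{-1},\gamma^{-1}\cdot\gamma L\gamma^{-1})$, and units $(L,L)$. Its topology has as basis the sets $U_{L,N,\gamma}=\{(L',\gamma L'): L'\in Z,\ (B_N(S(L'),L'),L')\text{ root-label isomorphic to }(B_N(S(L),L),L)\}$ for $L\in Z$, $N\in\mathbb{N}$, $\gamma\in\Gamma$ with $l(\gamma)\le N$. *)

theory Defs
  imports "HOL-Analysis.Analysis"
begin

text \<open>The group Gamma is a type 'g of class group_add (written additively, not
necessarily commutative); it is discrete.  Subgroups are sets of elements.\<close>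

definition is_subgroup :: "'g::group_add set \<Rightarrow> bool" where
  "is_subgroup L \<longleftrightarrow> 0 \<in> L \<and> (\<forall>x\<in>L. \<forall>y\<in>L. x + y \<in> L) \<and> (\<forall>x\<in>L. - x \<in> L)"

definition Sub :: "'g::group_add set set" where
  "Sub = {L. is_subgroup L}"

text \<open>Topology of pointwise convergence of indicator functions: pull back the
product topology on bool^Gamma (bool discrete) along L maps to its indicator.\<close>
definition Sub_top :: "'g::group_add set topology" where
  "Sub_top = pullback_topology Sub (\<lambda>L g. g \<in> L)
              (product_topology (\<lambda>_. discrete_topology (UNIV :: bool set)) UNIV)"

definition conj :: "'g::group_add \<Rightarrow> 'g set \<Rightarrow> 'g set" where
  "conj \<gamma> L = (\<lambda>l. \<gamma> + l + - \<gamma>) ` L"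

definition lcoset :: "'g::group_add \<Rightarrow> 'g set \<Rightarrow> 'g set" where
  "lcoset \<gamma> L = (\<lambda>l. \<gamma> + l) ` L"

definition cosets :: "'g::group_add set \<Rightarrow> 'g set set" where
  "cosets L = {lcoset \<gamma> L | \<gamma>. True}"

definition is_URS :: "'g::group_add set set \<Rightarrow> bool" where
  "is_URS Z \<longleftrightarrow> Z \<noteq> {} \<and> Z \<subseteq> Sub \<and> closedin Sub_top Z
     \<and> (\<forall>\<gamma>. \<forall>L\<in>Z. conj \<gamma> L \<in> Z)
     \<and> (\<forall>L\<in>Z. Z \<subseteq> Sub_top closure_of {conj \<gamma> L | \<gamma>. True})"

definition word_length :: "'g::group_add set \<Rightarrow> 'g \<Rightarrow> nat" where
  "word_length Q \<gamma> = (LEAST n. \<exists>xs. length xs = n \<and> set xs \<subseteq> Q \<and> sum_list xs = \<gamma>)"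

definition sch_edges :: "'g::group_add set \<Rightarrow> 'g set \<Rightarrow> ('g set \<times> 'g \<times> 'g set) set" where
  "sch_edges Q L = {(lcoset \<gamma> L, q, lcoset (q + \<gamma>) L) | \<gamma> q. q \<in> Q}"

definition sch_adj :: "'g::group_add set \<Rightarrow> 'g set \<Rightarrow> ('g set \<times> 'g set) set" where
  "sch_adj Q L = {(c, d). \<exists>q. (c, q, d) \<in> sch_edges Q L \<or> (d, q, c) \<in> sch_edges Q L}"

definition sch_ball :: "'g::group_add set \<Rightarrow> 'g set \<Rightarrow> nat \<Rightarrow> 'g set set" where
  "sch_ball Q L N = {c. \<exists>n\<le>N. (L, c) \<in> (sch_adj Q L) ^^ n}"

definition ball_iso :: "'g::group_add set \<Rightarrow> nat \<Rightarrow> 'g set \<Rightarrow> 'g set \<Rightarrow> bool" where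
  "ball_iso Q N L L' \<longleftrightarrow> (\<exists>f. bij_betw f (sch_ball Q L N) (sch_ball Q L' N) \<and> f L = L' \<and>
     (\<forall>c\<in>sch_ball Q L N. \<forall>d\<in>sch_ball Q L N. \<forall>q.
        (c, q, d) \<in> sch_edges Q L \<longleftrightarrow> (f c, q, f d) \<in> sch_edges Q L'))"

definition TG_r :: "'g::group_add set \<times> 'g \<Rightarrow> 'g set" where
  "TG_r x = fst x"
definition TG_s :: "'g::group_add set \<times> 'g \<Rightarrow> 'g set" where
  "TG_s x = conj (snd x) (fst x)"
definition TG_mult :: "'g::group_add set \<times> 'g \<Rightarrow> 'g set \<times> 'g \<Rightarrow> 'g set \<times> 'g" where
  "TG_mult x y = (fst x, snd y + snd x)"
definition TG_inv :: "'g::group_add set \<times> 'g \<Rightarrow> 'g set \<times> 'g" where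
  "TG_inv x = (conj (snd x) (fst x), - snd x)"

definition TG_top :: "'g::group_add set set \<Rightarrow> ('g set \<times> 'g) topology" where
  "TG_top Z = prod_topology (subtopology Sub_top Z) (discrete_topology UNIV)"

text \<open>The groupoid G.  Operations are defined via a choice of coset
representative (they are independent of the choice).\<close>
definition GG :: "'g::group_add set set \<Rightarrow> ('g set \<times> 'g set) set" where
  "GG Z = {(L, c). L \<in> Z \<and> c \<in> cosets L}"

definition rep :: "'g::group_add set \<Rightarrow> 'g set \<Rightarrow> 'g" where
  "rep L c = (SOME \<gamma>. c = lcoset \<gamma> L)"

definition G_r :: "'g::group_add set \<times> 'g set \<Rightarrow> 'g set" where
  "G_r x = fst x"
definition G_s :: "'g::group_add set \<times> 'g set \<Rightarrow> 'g set" where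
  "G_s x = conj (rep (fst x) (snd x)) (fst x)"
definition G_mult :: "'g::group_add set \<times> 'g set \<Rightarrow> 'g set \<times> 'g set \<Rightarrow> 'g set \<times> 'g set" where
  "G_mult x y = (fst x, lcoset (rep (fst y) (snd y) + rep (fst x) (snd x)) (fst x))"
definition G_inv :: "'g::group_add set \<times> 'g set \<Rightarrow> 'g set \<times> 'g set" where
  "G_inv x = (let \<gamma> = rep (fst x) (snd x) in (conj \<gamma> (fst x), lcoset (- \<gamma>) (conj \<gamma> (fst x))))"

definition U_basic :: "'g::group_add set \<Rightarrow> 'g set set \<Rightarrow> 'g set \<Rightarrow> nat \<Rightarrow> 'g \<Rightarrow> ('g set \<times> 'g set) set" where
  "U_basic Q Z L N \<gamma> = {(L', lcoset \<gamma> L') | L'. L' \<in> Z \<and> ball_iso Q N L L'}"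

definition G_top :: "'g::group_add set \<Rightarrow> 'g set set \<Rightarrow> ('g set \<times> 'g set) topology" where
  "G_top Q Z = topology_generated_by
     {U_basic Q Z L N \<gamma> | L N \<gamma>. L \<in> Z \<and> word_length Q \<gamma> \<le> N}"

definition qmap :: "'g::group_add set \<times> 'g \<Rightarrow> 'g set \<times> 'g set" where
  "qmap x = (fst x, lcoset (snd x) (fst x))"

end

(*
  The N-ball of the Schreier graph S(L) is determined by which words of length at most 2N+1 lie
  in L, and it determines in turn which words of length at most N lie in L.  Hence the preimage
  under q of a basic set U_{L,N,gamma}, i.e. the set of pairs (L', eta) with B_N(S(L')) isomorphic
  to B_N(S(L)) and eta L' = gamma L', contains around each of its points a cylinder of Sub(Gamma)
  prescribing membership of the finitely many words of length at most 2N+1 and of gamma^-1 eta;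
  conversely, the image of a cylinder times {eta} contains a basic set.  The groupoid identities
  hold because the operations of G do not depend on the chosen coset representatives.
*)

theory Submission
  imports Defs
begin

section \<open>Cosets, conjugates and the groupoid operations\<close>

declare add_uminus_conv_diff[simp del]

lemma Sub_zero: "L \<in> Sub \<Longrightarrow> 0 \<in> L"
  and Sub_add: "L \<in> Sub \<Longrightarrow> x \<in> L \<Longrightarrow> y \<in> L \<Longrightarrow> x + y \<in> L"
  and Sub_minus: "L \<in> Sub \<Longrightarrow> x \<in> L \<Longrightarrow> - x \<in> L"
  by (simp_all add: Sub_def is_subgroup_def)

lemma lcoset_zero [simp]: "lcoset 0 L = L"
  by (simp add: lcoset_def)

lemma lcoset_lcoset [simp]: "lcoset a (lcoset b L) = lcoset (a + b) L"
  by (simp add: lcoset_def image_image add.assoc)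

lemma lcoset_eq_self_iff:
  assumes L: "L \<in> Sub"
  shows "lcoset g L = L \<longleftrightarrow> g \<in> L"
proof
  assume "lcoset g L = L"
  moreover have "g + 0 \<in> lcoset g L"
    using Sub_zero[OF L] unfolding lcoset_def by (rule imageI)
  ultimately show "g \<in> L" by simp
next
  assume g: "g \<in> L"
  show "lcoset g L = L"
  proof
    show "lcoset g L \<subseteq> L" using L g by (auto simp: lcoset_def intro: Sub_add)
    show "L \<subseteq> lcoset g L"
    proof
      fix x assume "x \<in> L"
      then have "- g + x \<in> L" using L g by (auto intro: Sub_add Sub_minus)
      moreover have "x = g + (- g + x)" by (simp add: add.assoc[symmetric])
      ultimately show "x \<in> lcoset g L" unfolding lcoset_def by blast
    qed
  qed
qed

lemma lcoset_eq_iff: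
  assumes "L \<in> Sub"
  shows "lcoset a L = lcoset b L \<longleftrightarrow> - b + a \<in> L"
proof -
  have "lcoset a L = lcoset b L \<longleftrightarrow> lcoset (- b) (lcoset a L) = lcoset (- b) (lcoset b L)"
    by (metis lcoset_lcoset lcoset_zero add.assoc add.left_inverse add_0)
  also have "\<dots> \<longleftrightarrow> lcoset (- b + a) L = L" by simp
  also have "\<dots> \<longleftrightarrow> - b + a \<in> L" using lcoset_eq_self_iff[OF assms] .
  finally show ?thesis .
qed

lemma conj_conj: "conj a (conj b L) = conj (a + b) L"
  by (simp add: conj_def image_image add.assoc minus_add)

lemma conj_eq_self:
  assumes L: "L \<in> Sub" and l: "l \<in> L"
  shows "conj l L = L"
proof
  show "conj l L \<subseteq> L" using L l by (auto simp: conj_def intro!: Sub_add Sub_minus)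
  show "L \<subseteq> conj l L"
  proof
    fix x assume "x \<in> L"
    then have "- l + x + l \<in> L" using L l by (auto intro!: Sub_add Sub_minus)
    moreover have "x = l + (- l + x + l) + - l" by (simp add: add.assoc)
    ultimately show "x \<in> conj l L" unfolding conj_def by blast
  qed
qed

lemma conj_eq_if_lcoset_eq:
  assumes L: "L \<in> Sub" and "lcoset a L = lcoset b L"
  shows "conj a L = conj b L"
proof -
  have l: "- b + a \<in> L" using assms by (simp add: lcoset_eq_iff)
  have "conj a L = conj b (conj (- b + a) L)" by (simp add: conj_conj add.assoc[symmetric])
  also have "\<dots> = conj b L" by (simp add: conj_eq_self[OF L l])
  finally show ?thesis .
qed

lemma lcoset_rep: "lcoset (rep L (lcoset g L)) L = lcoset g L"
  unfolding rep_def by (rule someI_ex[where P = "\<lambda>x. lcoset g L = lcoset x L", THEN sym]) blast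

lemma lcoset_add_conj: "lcoset (h + g) L = (\<lambda>x. x + g) ` lcoset h (conj g L)"
  by (simp add: lcoset_def conj_def image_image add.assoc)

lemma lcoset_minus_conj:
  assumes "L \<in> Sub"
  shows "lcoset (- a) (conj a L) = uminus ` lcoset a L"
proof -
  have "uminus ` L = L" using Sub_minus[OF assms] by force
  then have "lcoset (- a) (conj a L) = (\<lambda>x. x + - a) ` uminus ` L"
    by (simp add: lcoset_def conj_def image_image add.assoc[symmetric])
  also have "\<dots> = uminus ` lcoset a L"
    by (simp add: lcoset_def image_image minus_add)
  finally show ?thesis .
qed

lemma G_s_qmap:
  assumes "L \<in> Sub"
  shows "G_s (qmap (L, g)) = conj g L"
  using conj_eq_if_lcoset_eq[OF assms lcoset_rep] by (simp add: G_s_def qmap_def)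

lemma G_mult_qmap: "G_mult (qmap (L, g)) (qmap (conj g L, h)) = qmap (L, h + g)"
proof -
  define g' where "g' = rep L (lcoset g L)"
  define h' where "h' = rep (conj g L) (lcoset h (conj g L))"
  have "lcoset (h' + g') L = lcoset h' (lcoset g L)"
    by (simp add: g'_def lcoset_rep flip: lcoset_lcoset)
  also have "\<dots> = (\<lambda>x. x + g) ` lcoset h' (conj g L)" by (simp add: lcoset_add_conj)
  also have "\<dots> = (\<lambda>x. x + g) ` lcoset h (conj g L)" by (simp add: h'_def lcoset_rep)
  also have "\<dots> = lcoset (h + g) L" by (simp add: lcoset_add_conj)
  finally show ?thesis by (simp add: G_mult_def qmap_def g'_def h'_def)
qed

lemma G_inv_qmap:
  assumes L: "L \<in> Sub"
  shows "G_inv (qmap (L, g)) = qmap (TG_inv (L, g))"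
proof -
  define g' where "g' = rep L (lcoset g L)"
  have g': "lcoset g' L = lcoset g L" by (simp add: g'_def lcoset_rep)
  then have "conj g' L = conj g L" by (rule conj_eq_if_lcoset_eq[OF L])
  moreover have "lcoset (- g') (conj g' L) = lcoset (- g) (conj g L)"
    using g' by (simp add: lcoset_minus_conj[OF L])
  ultimately show ?thesis by (simp add: G_inv_def TG_inv_def qmap_def Let_def flip: g'_def)
qed

lemma qmap_mult:
  assumes "x \<in> Sub \<times> UNIV" and "TG_s x = TG_r y"
  shows "G_s (qmap x) = G_r (qmap y) \<and> qmap (TG_mult x y) = G_mult (qmap x) (qmap y)"
proof -
  obtain L g where x: "x = (L, g)" "L \<in> Sub" using assms(1) by blast
  obtain h where y: "y = (conj g L, h)" using assms(2) by (cases y) (simp add: x TG_s_def TG_r_def)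
  have "G_r (qmap y) = conj g L" by (simp add: y G_r_def qmap_def)
  moreover have "TG_mult x y = (L, h + g)" by (simp add: x y TG_mult_def)
  ultimately show ?thesis by (simp add: x y G_s_qmap G_mult_qmap)
qed

lemma qmap_inv:
  assumes "x \<in> Sub \<times> UNIV"
  shows "G_r (qmap x) = TG_r x \<and> G_s (qmap x) = TG_s x \<and> qmap (TG_inv x) = G_inv (qmap x)"
proof -
  obtain L g where x: "x = (L, g)" "L \<in> Sub" using assms by blast
  have "G_r (qmap x) = TG_r x" by (simp add: x G_r_def TG_r_def qmap_def)
  moreover have "G_s (qmap x) = TG_s x" by (simp add: x G_s_qmap TG_s_def)
  ultimately show ?thesis by (simp add: x G_inv_qmap)
qed

section \<open>Words of bounded length\<close>

definition word_ball :: "'g::group_add set \<Rightarrow> nat \<Rightarrow> 'g set" where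
  "word_ball Q n = {sum_list ys | ys. set ys \<subseteq> Q \<and> length ys \<le> n}"

lemma sum_list_in_word_ball: "set ys \<subseteq> Q \<Longrightarrow> length ys \<le> n \<Longrightarrow> sum_list ys \<in> word_ball Q n"
  unfolding word_ball_def by blast

lemma zero_in_word_ball: "0 \<in> word_ball Q n"
  using sum_list_in_word_ball[of "[]"] by simp

lemma generator_in_word_ball: "q \<in> Q \<Longrightarrow> q \<in> word_ball Q 1"
  using sum_list_in_word_ball[of "[q]"] by simp

lemma word_ball_mono: "m \<le> n \<Longrightarrow> word_ball Q m \<subseteq> word_ball Q n"
  unfolding word_ball_def by fastforce

lemma word_ball_add: "a \<in> word_ball Q m \<Longrightarrow> b \<in> word_ball Q n \<Longrightarrow> a + b \<in> word_ball Q (m + n)"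
  unfolding word_ball_def by clarify (rule_tac x = "ys @ ysa" in exI, auto)

lemma minus_sum_list: "- sum_list (ys :: 'g::group_add list) = sum_list (rev (map uminus ys))"
  by (induction ys) (auto simp: minus_add)

lemma word_ball_minus: "\<forall>q\<in>Q. - q \<in> Q \<Longrightarrow> a \<in> word_ball Q n \<Longrightarrow> - a \<in> word_ball Q n"
  unfolding word_ball_def
  by clarify (rule_tac x = "rev (map uminus ys)" in exI, auto simp: minus_sum_list)

lemma finite_word_ball: "finite Q \<Longrightarrow> finite (word_ball Q n)"
proof -
  assume "finite Q"
  then have "finite (sum_list ` {ys. set ys \<subseteq> Q \<and> length ys \<le> n})"
    by (simp add: finite_lists_length_le)
  moreover have "word_ball Q n = sum_list ` {ys. set ys \<subseteq> Q \<and> length ys \<le> n}"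
    unfolding word_ball_def by auto
  ultimately show ?thesis by simp
qed

lemma in_word_ball_word_length:
  assumes "\<forall>g. \<exists>xs. set xs \<subseteq> Q \<and> sum_list xs = g"
  shows "g \<in> word_ball Q (word_length Q g)"
proof -
  have "\<exists>n xs. length xs = n \<and> set xs \<subseteq> Q \<and> sum_list xs = g" using assms by blast
  then have "\<exists>xs. length xs = word_length Q g \<and> set xs \<subseteq> Q \<and> sum_list xs = g"
    unfolding word_length_def by (rule LeastI_ex)
  then show ?thesis unfolding word_ball_def by fastforce
qed

lemma finite_subset_word_ball:
  assumes "\<forall>g. \<exists>xs. set xs \<subseteq> Q \<and> sum_list xs = g" and "finite F"
  shows "\<exists>n. F \<subseteq> word_ball Q n"
  using assms(2)
proof (induction F rule: finite_induct)
  case (insert g F)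
  then obtain n where "F \<subseteq> word_ball Q n" by blast
  moreover have "word_ball Q n \<subseteq> word_ball Q (max n (word_length Q g))"
    and "word_ball Q (word_length Q g) \<subseteq> word_ball Q (max n (word_length Q g))"
    by (simp_all add: word_ball_mono)
  ultimately have "insert g F \<subseteq> word_ball Q (max n (word_length Q g))"
    using in_word_ball_word_length[OF assms(1), of g] by blast
  then show ?case by blast
qed simp

section \<open>Balls in Schreier graphs\<close>

lemma sch_edges_iff:
  "(c, q, d) \<in> sch_edges Q L \<longleftrightarrow> q \<in> Q \<and> (\<exists>\<gamma>. c = lcoset \<gamma> L) \<and> d = lcoset q c"
  unfolding sch_edges_def by auto

lemma sch_adj_relpow_lcoset_sum_list:
  "set ys \<subseteq> Q \<Longrightarrow> (L, lcoset (sum_list ys) L) \<in> sch_adj Q L ^^ length ys"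
proof (induction ys)
  case (Cons q ys)
  then have "(lcoset (sum_list ys) L, q, lcoset (sum_list (q # ys)) L) \<in> sch_edges Q L"
    by (auto simp: sch_edges_iff)
  then have "(lcoset (sum_list ys) L, lcoset (sum_list (q # ys)) L) \<in> sch_adj Q L"
    unfolding sch_adj_def by blast
  with Cons show ?case by (auto intro: relpow_Suc_I)
qed simp

lemma sch_adj_relpowE:
  assumes sym: "\<forall>q\<in>Q. - q \<in> Q" and "(L, c) \<in> sch_adj Q L ^^ n"
  obtains ys where "set ys \<subseteq> Q" "length ys = n" "c = lcoset (sum_list ys) L"
  using assms(2)
proof (induction n arbitrary: c thesis)
  case 0
  then show ?case by (metis list.size(3) empty_subsetI lcoset_zero relpow_0_E set_empty sum_list.Nil)
next
  case (Suc n)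
  from Suc.prems(2) obtain b where b: "(L, b) \<in> sch_adj Q L ^^ n" "(b, c) \<in> sch_adj Q L"
    by (rule relpow_Suc_E)
  obtain ys where ys: "set ys \<subseteq> Q" "length ys = n" "b = lcoset (sum_list ys) L"
    using Suc.IH[OF _ b(1)] by blast
  from b(2) obtain q where "(b, q, c) \<in> sch_edges Q L \<or> (c, q, b) \<in> sch_edges Q L"
    unfolding sch_adj_def by blast
  then obtain p where "p \<in> Q" "c = lcoset p b"
    using sym by (auto simp: sch_edges_iff add.assoc[symmetric])
  with ys show ?case by (intro Suc.prems(1)[of "p # ys"]) auto
qed

lemma sch_ball_eq:
  assumes "\<forall>q\<in>Q. - q \<in> Q"
  shows "sch_ball Q L N = (\<lambda>\<gamma>. lcoset \<gamma> L) ` word_ball Q N"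
proof (intro set_eqI iffI)
  fix c assume "c \<in> sch_ball Q L N"
  then obtain n where "n \<le> N" "(L, c) \<in> sch_adj Q L ^^ n" unfolding sch_ball_def by blast
  with assms show "c \<in> (\<lambda>\<gamma>. lcoset \<gamma> L) ` word_ball Q N"
    by (elim sch_adj_relpowE) (auto intro: sum_list_in_word_ball)
next
  fix c assume "c \<in> (\<lambda>\<gamma>. lcoset \<gamma> L) ` word_ball Q N"
  then obtain ys where "set ys \<subseteq> Q" "length ys \<le> N" "c = lcoset (sum_list ys) L"
    unfolding word_ball_def by blast
  then show "c \<in> sch_ball Q L N"
    unfolding sch_ball_def using sch_adj_relpow_lcoset_sum_list by blast
qed

lemma lcoset_in_sch_ball: "\<forall>q\<in>Q. - q \<in> Q \<Longrightarrow> g \<in> word_ball Q N \<Longrightarrow> lcoset g L \<in> sch_ball Q L N"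
  by (simp add: sch_ball_eq)

lemma ball_iso_map_lcoset:
  assumes sym: "\<forall>q\<in>Q. - q \<in> Q" and root: "f L = L'"
    and edges: "\<forall>c\<in>sch_ball Q L N. \<forall>d\<in>sch_ball Q L N. \<forall>q.
        (c, q, d) \<in> sch_edges Q L \<longleftrightarrow> (f c, q, f d) \<in> sch_edges Q L'"
    and g: "g \<in> word_ball Q N"
  shows "f (lcoset g L) = lcoset g L'"
proof -
  have "f (lcoset (sum_list ys) L) = lcoset (sum_list ys) L'" if "set ys \<subseteq> Q" "length ys \<le> N" for ys
    using that
  proof (induction ys)
    case (Cons q ys)
    let ?c = "lcoset (sum_list ys) L" and ?d = "lcoset (sum_list (q # ys)) L"
    have "?c \<in> sch_ball Q L N" "?d \<in> sch_ball Q L N"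
      using Cons.prems sum_list_in_word_ball[of ys Q N] sum_list_in_word_ball[of "q # ys" Q N]
      by (auto intro!: lcoset_in_sch_ball[OF sym])
    moreover have "(?c, q, ?d) \<in> sch_edges Q L" using Cons.prems by (auto simp: sch_edges_iff)
    ultimately have "(f ?c, q, f ?d) \<in> sch_edges Q L'" using edges by blast
    then show ?case using Cons by (simp add: sch_edges_iff)
  qed (simp add: root)
  with g show ?thesis unfolding word_ball_def by blast
qed

lemma ball_iso_imp_agree:
  assumes sym: "\<forall>q\<in>Q. - q \<in> Q" and L: "L \<in> Sub" and L': "L' \<in> Sub"
    and iso: "ball_iso Q N L L'" and g: "g \<in> word_ball Q N"
  shows "g \<in> L \<longleftrightarrow> g \<in> L'"
proof -
  obtain f where f: "bij_betw f (sch_ball Q L N) (sch_ball Q L' N)" "f L = L'"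
      "\<forall>c\<in>sch_ball Q L N. \<forall>d\<in>sch_ball Q L N. \<forall>q.
        (c, q, d) \<in> sch_edges Q L \<longleftrightarrow> (f c, q, f d) \<in> sch_edges Q L'"
    using iso unfolding ball_iso_def by blast
  have "lcoset g L \<in> sch_ball Q L N" "L \<in> sch_ball Q L N"
    using lcoset_in_sch_ball[OF sym g] lcoset_in_sch_ball[OF sym zero_in_word_ball, of L N]
    by simp_all
  then have "lcoset g L = L \<longleftrightarrow> f (lcoset g L) = f L"
    using f(1) unfolding bij_betw_def by (metis inj_onD)
  also have "\<dots> \<longleftrightarrow> lcoset g L' = L'" using ball_iso_map_lcoset[OF sym f(2,3) g] f(2) by simp
  finally show ?thesis using lcoset_eq_self_iff[OF L] lcoset_eq_self_iff[OF L'] by simp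
qed

lemma ball_iso_refl: "ball_iso Q N L L"
  unfolding ball_iso_def by (rule exI[of _ id]) auto

lemma ball_iso_trans:
  assumes "ball_iso Q N L1 L2" "ball_iso Q N L2 L3"
  shows "ball_iso Q N L1 L3"
proof -
  obtain f where f: "bij_betw f (sch_ball Q L1 N) (sch_ball Q L2 N)" "f L1 = L2"
      "\<forall>c\<in>sch_ball Q L1 N. \<forall>d\<in>sch_ball Q L1 N. \<forall>q.
        (c, q, d) \<in> sch_edges Q L1 \<longleftrightarrow> (f c, q, f d) \<in> sch_edges Q L2"
    using assms(1) unfolding ball_iso_def by blast
  obtain g where g: "bij_betw g (sch_ball Q L2 N) (sch_ball Q L3 N)" "g L2 = L3"
      "\<forall>c\<in>sch_ball Q L2 N. \<forall>d\<in>sch_ball Q L2 N. \<forall>q.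
        (c, q, d) \<in> sch_edges Q L2 \<longleftrightarrow> (g c, q, g d) \<in> sch_edges Q L3"
    using assms(2) unfolding ball_iso_def by blast
  have "\<forall>c\<in>sch_ball Q L1 N. f c \<in> sch_ball Q L2 N" using f(1) by (auto dest: bij_betwE)
  then show ?thesis
    unfolding ball_iso_def using f g by (intro exI[of _ "g \<circ> f"]) (auto intro: bij_betw_trans)
qed

lemma lcoset_eq_iff_if_agree:
  assumes sym: "\<forall>q\<in>Q. - q \<in> Q" and L1: "L1 \<in> Sub" and L2: "L2 \<in> Sub"
    and agree: "\<forall>g\<in>word_ball Q n. g \<in> L1 \<longleftrightarrow> g \<in> L2"
    and a: "a \<in> word_ball Q i" and b: "b \<in> word_ball Q j" and "i + j \<le> n"
  shows "lcoset a L1 = lcoset b L1 \<longleftrightarrow> lcoset a L2 = lcoset b L2"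
proof -
  have "- b + a \<in> word_ball Q (j + i)" by (rule word_ball_add[OF word_ball_minus[OF sym b] a])
  also have "\<dots> \<subseteq> word_ball Q n" using \<open>i + j \<le> n\<close> by (simp add: word_ball_mono)
  finally show ?thesis using agree by (simp add: lcoset_eq_iff L1 L2)
qed

lemma agree_imp_ball_iso:
  assumes sym: "\<forall>q\<in>Q. - q \<in> Q" and L1: "L1 \<in> Sub" and L2: "L2 \<in> Sub"
    and agree: "\<forall>g\<in>word_ball Q (2 * N + 1). g \<in> L1 \<longleftrightarrow> g \<in> L2"
  shows "ball_iso Q N L1 L2"
proof -
  note lcoset_eq = lcoset_eq_iff_if_agree[OF sym L1 L2 agree]
  define h where "h c = lcoset (SOME a. a \<in> word_ball Q N \<and> c = lcoset a L1) L2" for c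
  have h: "h (lcoset a L1) = lcoset a L2" if a: "a \<in> word_ball Q N" for a
  proof -
    have "\<exists>a'. a' \<in> word_ball Q N \<and> lcoset a L1 = lcoset a' L1" using a by blast
    then have "\<exists>a'. a' \<in> word_ball Q N \<and> lcoset a L1 = lcoset a' L1 \<and> h (lcoset a L1) = lcoset a' L2"
      unfolding h_def by (rule someI2_ex) blast
    then show ?thesis using lcoset_eq[OF a] by fastforce
  qed
  have edges: "(lcoset a L1, q, lcoset b L1) \<in> sch_edges Q L1 \<longleftrightarrow>
      (lcoset a L2, q, lcoset b L2) \<in> sch_edges Q L2"
    if a: "a \<in> word_ball Q N" and b: "b \<in> word_ball Q N" for a b q
  proof -
    have "lcoset b L1 = lcoset (q + a) L1 \<longleftrightarrow> lcoset b L2 = lcoset (q + a) L2" if "q \<in> Q"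
      using lcoset_eq[OF b word_ball_add[OF generator_in_word_ball[OF that] a]] by simp
    then show ?thesis by (auto simp: sch_edges_iff)
  qed
  have "bij_betw h (sch_ball Q L1 N) (sch_ball Q L2 N)"
    unfolding bij_betw_def inj_on_def sch_ball_eq[OF sym] using h lcoset_eq
    by (auto simp: image_image)
  moreover have "h L1 = L2" using h[OF zero_in_word_ball] by simp
  ultimately show ?thesis
    unfolding ball_iso_def sch_ball_eq[OF sym] using h edges by (intro exI[of _ h]) auto
qed

section \<open>Cylinder sets of Sub(Gamma)\<close>

definition Sub_cylinder :: "'g::group_add set \<Rightarrow> 'g set \<Rightarrow> 'g set set" where
  "Sub_cylinder F L0 = {L \<in> Sub. \<forall>g\<in>F. g \<in> L \<longleftrightarrow> g \<in> L0}"

lemma Sub_cylinder_antimono: "F \<subseteq> F' \<Longrightarrow> Sub_cylinder F' L0 \<subseteq> Sub_cylinder F L0"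
  unfolding Sub_cylinder_def by blast

lemma topspace_Sub_top: "topspace Sub_top = Sub"
  unfolding Sub_top_def by (simp add: topspace_pullback_topology)

lemma openin_Sub_cylinder:
  assumes "finite F"
  shows "openin Sub_top (Sub_cylinder F L0)"
proof -
  define X where "X g = (if g \<in> F then {g \<in> L0} else UNIV)" for g
  have "finite {g. X g \<noteq> UNIV}" using assms by (rule rev_finite_subset) (auto simp: X_def)
  then have "openin (product_topology (\<lambda>_. discrete_topology UNIV) UNIV) (PiE UNIV X)"
    by (simp add: openin_PiE_gen)
  moreover have "(g \<in> L) \<in> X g \<longleftrightarrow> (g \<in> F \<longrightarrow> (g \<in> L \<longleftrightarrow> g \<in> L0))" for g L
    by (cases "g \<in> L0") (auto simp: X_def)
  then have "Sub_cylinder F L0 = (\<lambda>L g. g \<in> L) -` PiE UNIV X \<inter> Sub"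
    by (auto simp: Sub_cylinder_def PiE_iff)
  ultimately show ?thesis unfolding Sub_top_def openin_pullback_topology by blast
qed

lemma Sub_cylinder_subset_openin:
  assumes "openin Sub_top W" "L0 \<in> W"
  obtains F where "finite F" "Sub_cylinder F L0 \<subseteq> W"
proof -
  obtain V where V: "openin (product_topology (\<lambda>_. discrete_topology UNIV) UNIV) V"
      "W = (\<lambda>L g. g \<in> L) -` V \<inter> Sub"
    using assms(1) unfolding Sub_top_def openin_pullback_topology by blast
  then have "(\<lambda>g. g \<in> L0) \<in> V" using assms(2) by blast
  then obtain X where X: "(\<lambda>g. g \<in> L0) \<in> PiE UNIV X"
      "finite {g. X g \<noteq> topspace (discrete_topology UNIV)}" "PiE UNIV X \<subseteq> V"
    using product_topology_open_contains_basis[OF V(1)] by blast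
  define F where "F = {g. X g \<noteq> UNIV}"
  have "L \<in> W" if L: "L \<in> Sub_cylinder F L0" for L
  proof -
    have "(g \<in> L) \<in> X g" for g
    proof (cases "g \<in> F")
      case True
      then have "(g \<in> L) = (g \<in> L0)" using L by (simp add: Sub_cylinder_def)
      then show ?thesis using X(1) by (simp add: PiE_iff)
    qed (simp add: F_def)
    then have "(\<lambda>g. g \<in> L) \<in> V" using X(3) by (auto simp: PiE_iff)
    moreover have "L \<in> Sub" using L by (simp add: Sub_cylinder_def)
    ultimately show ?thesis using V(2) by blast
  qed
  moreover have "finite F" using X(2) by (simp add: F_def)
  ultimately show thesis using that by blast
qed

lemma word_ball_cylinder_subset_openin:
  assumes "\<forall>g. \<exists>xs. set xs \<subseteq> Q \<and> sum_list xs = g" and "openin Sub_top W" "L0 \<in> W"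
  obtains N where "Sub_cylinder (word_ball Q N) L0 \<subseteq> W"
proof -
  obtain F where F: "finite F" "Sub_cylinder F L0 \<subseteq> W"
    using Sub_cylinder_subset_openin[OF assms(2,3)] .
  obtain N where "F \<subseteq> word_ball Q N"
    using finite_subset_word_ball[OF assms(1) F(1)] by blast
  then have "Sub_cylinder (word_ball Q N) L0 \<subseteq> Sub_cylinder F L0" by (rule Sub_cylinder_antimono)
  with F(2) show thesis by (intro that) (rule order_trans)
qed

section \<open>The quotient map\<close>

lemma topspace_TG_top: "Z \<subseteq> Sub \<Longrightarrow> topspace (TG_top Z) = Z \<times> UNIV"
  by (auto simp: TG_top_def topspace_Sub_top)

lemma qmap_image_eq_GG: "qmap ` (Z \<times> UNIV) = GG Z"
  by (force simp: GG_def cosets_def qmap_def)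

lemma qmap_in_U_basic_iff:
  "qmap (L', \<eta>) \<in> U_basic Q Z L N \<gamma> \<longleftrightarrow> L' \<in> Z \<and> ball_iso Q N L L' \<and> lcoset \<eta> L' = lcoset \<gamma> L'"
  by (auto simp: U_basic_def qmap_def)

lemma topspace_G_top: "topspace (G_top Q Z) = GG Z"
proof -
  have "qmap (L, g) \<in> U_basic Q Z L (word_length Q g) g" if "L \<in> Z" for L g
    using that by (simp add: qmap_in_U_basic_iff ball_iso_refl)
  then have "GG Z \<subseteq> topspace (G_top Q Z)"
    unfolding G_top_def qmap_image_eq_GG[symmetric] by fastforce
  moreover have "topspace (G_top Q Z) \<subseteq> GG Z"
    unfolding G_top_def by (auto simp: U_basic_def GG_def cosets_def)
  ultimately show ?thesis by blast
qed

lemma qmap_in_U_basic_cylinder: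
  assumes sym: "\<forall>q\<in>Q. - q \<in> Q" and "Z \<subseteq> Sub"
    and L1: "qmap (L1, \<eta>) \<in> U_basic Q Z L N \<gamma>"
    and L2: "L2 \<in> Z \<inter> Sub_cylinder (insert (- \<gamma> + \<eta>) (word_ball Q (2 * N + 1))) L1"
  shows "qmap (L2, \<eta>) \<in> U_basic Q Z L N \<gamma>"
proof -
  have Sub: "L1 \<in> Sub" "L2 \<in> Sub" using L1 L2 \<open>Z \<subseteq> Sub\<close> by (auto simp: qmap_in_U_basic_iff)
  have "ball_iso Q N L1 L2"
    using L2 by (intro agree_imp_ball_iso[OF sym Sub]) (auto simp: Sub_cylinder_def)
  then have "ball_iso Q N L L2" using L1 by (auto simp: qmap_in_U_basic_iff intro: ball_iso_trans)
  moreover have "lcoset \<eta> L2 = lcoset \<gamma> L2"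
    using L1 L2 by (auto simp: qmap_in_U_basic_iff Sub_cylinder_def lcoset_eq_iff Sub)
  ultimately show ?thesis using L2 by (simp add: qmap_in_U_basic_iff)
qed

lemma U_basic_subset_qmap_cylinder:
  assumes sym: "\<forall>q\<in>Q. - q \<in> Q" and "Z \<subseteq> Sub" and "L \<in> Sub"
  shows "U_basic Q Z L N \<gamma> \<subseteq> qmap ` ((Z \<inter> Sub_cylinder (word_ball Q N) L) \<times> {\<gamma>})"
proof
  fix p assume "p \<in> U_basic Q Z L N \<gamma>"
  then obtain L' where p: "p = qmap (L', \<gamma>)" "L' \<in> Z" "ball_iso Q N L L'"
    by (auto simp: U_basic_def qmap_def)
  then have "L' \<in> Sub_cylinder (word_ball Q N) L"
    using ball_iso_imp_agree[OF sym \<open>L \<in> Sub\<close>] \<open>Z \<subseteq> Sub\<close> by (auto simp: Sub_cylinder_def)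
  with p show "p \<in> qmap ` ((Z \<inter> Sub_cylinder (word_ball Q N) L) \<times> {\<gamma>})" by blast
qed

lemma continuous_map_qmap:
  assumes "finite Q" and sym: "\<forall>q\<in>Q. - q \<in> Q" and "Z \<subseteq> Sub"
  shows "continuous_map (TG_top Z) (G_top Q Z) qmap"
  unfolding G_top_def
proof (rule continuous_on_generated_topo)
  show "qmap ` topspace (TG_top Z) \<subseteq> \<Union> {U_basic Q Z L N \<gamma> | L N \<gamma>. L \<in> Z \<and> word_length Q \<gamma> \<le> N}"
    using topspace_G_top[of Q Z] unfolding G_top_def
    by (simp add: topspace_TG_top[OF \<open>Z \<subseteq> Sub\<close>] qmap_image_eq_GG)
next
  fix U assume "U \<in> {U_basic Q Z L N \<gamma> | L N \<gamma>. L \<in> Z \<and> word_length Q \<gamma> \<le> N}"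
  then obtain L N \<gamma> where U: "U = U_basic Q Z L N \<gamma>" by blast
  show "openin (TG_top Z) (qmap -` U \<inter> topspace (TG_top Z))"
  proof (subst openin_subopen, intro ballI)
    fix x assume x: "x \<in> qmap -` U \<inter> topspace (TG_top Z)"
    obtain L1 \<eta> where x_eq: "x = (L1, \<eta>)" by (cases x)
    have "qmap (L1, \<eta>) \<in> U" "(L1, \<eta>) \<in> topspace (TG_top Z)" using x by (simp_all add: x_eq)
    define F where "F = insert (- \<gamma> + \<eta>) (word_ball Q (2 * N + 1))"
    let ?T = "(Z \<inter> Sub_cylinder F L1) \<times> {\<eta>}"
    have "finite F" using finite_word_ball[OF \<open>finite Q\<close>] by (simp add: F_def)
    then have "openin (TG_top Z) ?T"
      by (simp add: TG_top_def openin_prod_Times_iff openin_subtopology_Int2 openin_Sub_cylinder)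
    moreover have "?T \<subseteq> qmap -` U \<inter> topspace (TG_top Z)"
      using qmap_in_U_basic_cylinder[OF sym \<open>Z \<subseteq> Sub\<close> \<open>qmap (L1, \<eta>) \<in> U\<close>[unfolded U]]
      by (auto simp: U F_def topspace_TG_top[OF \<open>Z \<subseteq> Sub\<close>])
    moreover have "(L1, \<eta>) \<in> ?T"
      using \<open>(L1, \<eta>) \<in> topspace (TG_top Z)\<close> \<open>Z \<subseteq> Sub\<close>
      by (auto simp: Sub_cylinder_def topspace_TG_top)
    ultimately show "\<exists>T. openin (TG_top Z) T \<and> x \<in> T \<and> T \<subseteq> qmap -` U \<inter> topspace (TG_top Z)"
      unfolding x_eq by blast
  qed
qed

lemma open_map_qmap:
  assumes sym: "\<forall>q\<in>Q. - q \<in> Q" and gen: "\<forall>g. \<exists>xs. set xs \<subseteq> Q \<and> sum_list xs = g"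
    and "Z \<subseteq> Sub"
  shows "open_map (TG_top Z) (G_top Q Z) qmap"
  unfolding open_map_def
proof (intro allI impI, subst openin_subopen, intro ballI)
  fix U p assume U: "openin (TG_top Z) U" and "p \<in> qmap ` U"
  then obtain L1 \<eta> where p: "p = qmap (L1, \<eta>)" "(L1, \<eta>) \<in> U" by auto
  obtain W V where WV: "openin (subtopology Sub_top Z) W" "L1 \<in> W" "\<eta> \<in> V" "W \<times> V \<subseteq> U"
    using U[unfolded TG_top_def openin_prod_topology_alt] p(2) by meson
  then obtain T where T: "openin Sub_top T" "W = T \<inter> Z" by (auto simp: openin_subtopology)
  then obtain M where M: "Sub_cylinder (word_ball Q M) L1 \<subseteq> T"
    using word_ball_cylinder_subset_openin[OF gen] WV(2) by blast
  define N where "N = max M (word_length Q \<eta>)"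
  let ?B = "U_basic Q Z L1 N \<eta>"
  have L1: "L1 \<in> Z" "L1 \<in> Sub" using WV(2) T(2) \<open>Z \<subseteq> Sub\<close> by auto
  have "word_length Q \<eta> \<le> N" by (simp add: N_def)
  then have "openin (G_top Q Z) ?B"
    unfolding G_top_def using L1 by (intro topology_generated_by_Basis) blast
  moreover have "qmap (L1, \<eta>) \<in> ?B" using L1 by (simp add: qmap_in_U_basic_iff ball_iso_refl)
  moreover have "Sub_cylinder (word_ball Q N) L1 \<subseteq> Sub_cylinder (word_ball Q M) L1"
    by (simp add: Sub_cylinder_antimono word_ball_mono N_def)
  then have "?B \<subseteq> qmap ` U"
    using U_basic_subset_qmap_cylinder[OF sym \<open>Z \<subseteq> Sub\<close> L1(2), of N \<eta>] M T(2) WV(3,4) by blast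
  ultimately show "\<exists>T. openin (G_top Q Z) T \<and> p \<in> T \<and> T \<subseteq> qmap ` U"
    unfolding p(1) by blast
qed

theorem proposition4p1:
  fixes Q :: "'g::group_add set" and Z :: "'g set set"
  assumes "finite Q"
    and "\<forall>q\<in>Q. - q \<in> Q"
    and "\<forall>g. \<exists>xs. set xs \<subseteq> Q \<and> sum_list xs = g"
    and "is_URS Z"
  shows "continuous_map (TG_top Z) (G_top Q Z) qmap
     \<and> open_map (TG_top Z) (G_top Q Z) qmap
     \<and> qmap ` (Z \<times> UNIV) = GG Z
     \<and> (\<forall>x\<in>Z \<times> UNIV. \<forall>y\<in>Z \<times> UNIV. TG_s x = TG_r y \<longrightarrow>
          G_s (qmap x) = G_r (qmap y) \<and> qmap (TG_mult x y) = G_mult (qmap x) (qmap y))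
     \<and> (\<forall>x\<in>Z \<times> UNIV. G_r (qmap x) = TG_r x \<and> G_s (qmap x) = TG_s x
          \<and> qmap (TG_inv x) = G_inv (qmap x))
     \<and> quotient_map (TG_top Z) (G_top Q Z) qmap"
proof -
  have sub: "Z \<subseteq> Sub" using assms(4) by (simp add: is_URS_def)
  then have Z_Sub: "x \<in> Sub \<times> UNIV" if "x \<in> Z \<times> UNIV" for x using that by blast
  have cont: "continuous_map (TG_top Z) (G_top Q Z) qmap"
    by (rule continuous_map_qmap[OF assms(1,2) sub])
  moreover have opn: "open_map (TG_top Z) (G_top Q Z) qmap"
    by (rule open_map_qmap[OF assms(2,3) sub])
  moreover have "qmap ` (Z \<times> UNIV) = GG Z" by (rule qmap_image_eq_GG)
  moreover have "\<forall>x\<in>Z \<times> UNIV. \<forall>y\<in>Z \<times> UNIV. TG_s x = TG_r y \<longrightarrow>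
      G_s (qmap x) = G_r (qmap y) \<and> qmap (TG_mult x y) = G_mult (qmap x) (qmap y)"
    using qmap_mult[OF Z_Sub] by blast
  moreover have "\<forall>x\<in>Z \<times> UNIV. G_r (qmap x) = TG_r x \<and> G_s (qmap x) = TG_s x
      \<and> qmap (TG_inv x) = G_inv (qmap x)"
    using qmap_inv[OF Z_Sub] by blast
  moreover have "quotient_map (TG_top Z) (G_top Q Z) qmap"
    using continuous_open_imp_quotient_map[OF cont opn] sub
    by (simp add: topspace_TG_top topspace_G_top qmap_image_eq_GG)
  ultimately show ?thesis by (intro conjI)
qed

end
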